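(* Let $X$ be a Banach space, $H$ a Hilbert space, $S\in\mathcal{L}(X,H)$, $F\subset X$ convex and $n\in\mathbb{N}_0$. Then $c_n(S,F)\le(n+1)\,b_n(S,F)$. If $F$ is additionally symmetric, then $c_n(S,F)\le\sqrt{n+1}\,b_n(S,F)$.
   Context: Gelfand numbers: $c_n(S,F)=\inf_{L_1,\dots,L_n\in X'}\sup\{\tfrac12\|S(f)-S(g)\|: f,g\in F,\ L_k(f)=L_k(g)\ \forall k\le n\}$. Bernstein numbers: $b_n(S,F)$ is the supremum of all $r>0$ for which there exist an $(n+1)$-dimensional linear subspace $V\subset X$ on which $S$ is injective and $g\in F$ with $g+\{v\in V:\|Sv\|\le r\}\subset F$ (supremum of the empty set is $0$). *)

theory Defs
  imports "HOL-Analysis.Analysis"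
begin

definition gelfand_number ::
  "nat \<Rightarrow> ('a::real_normed_vector \<Rightarrow> 'b::real_normed_vector) \<Rightarrow> 'a set \<Rightarrow> ereal" where
  "gelfand_number n S F =
     (INF L \<in> {L :: nat \<Rightarrow> 'a \<Rightarrow> real. \<forall>k<n. bounded_linear (L k)}.
        Sup {ereal (norm (S f - S g) / 2) | f g. f \<in> F \<and> g \<in> F \<and> (\<forall>k<n. L k f = L k g)})"

definition bernstein_radii ::
  "nat \<Rightarrow> ('a::real_normed_vector \<Rightarrow> 'b::real_normed_vector) \<Rightarrow> 'a set \<Rightarrow> real set" where
  "bernstein_radii n S F =
     {r. r > 0 \<and> (\<exists>V g. subspace V \<and> dim V = n + 1 \<and> inj_on S V \<and> g \<in> F \<and>
            (\<lambda>v. g + v) ` {v \<in> V. norm (S v) \<le> r} \<subseteq> F)}"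

definition bernstein_number ::
  "nat \<Rightarrow> ('a::real_normed_vector \<Rightarrow> 'b::real_normed_vector) \<Rightarrow> 'a set \<Rightarrow> ereal" where
  "bernstein_number n S F =
     (if bernstein_radii n S F = {} then 0 else Sup (ereal ` bernstein_radii n S F))"

end

theory Submission
  imports Defs
begin

(* If \<theta> < c_n(S,F), then for any vectors w_j the n functionals x \<mapsto> \<langle>S x, w_j\<rangle> leave a pair
   f, g \<in> F with \<langle>S(f - g), w_j\<rangle> = 0 and |S(f - g)| > 2\<theta>. Iterating with the differences already
   found gives n + 1 pairs (f_k, g_k) whose differences d_k = f_k - g_k have mutually orthogonal
   images of norm > 2\<theta>. On V = span {d_k} the map S is injective, dim V = n + 1, and the
   coefficients of v = \<Sum> a_k d_k satisfy |a_k| |S d_k| \<le> |S v| and \<Sum> a_k\<^sup>2 |S d_k|\<^sup>2 = |S v|\<^sup>2.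
   For convex F, the mean c of the midpoints of the segments [g_k, f_k] satisfies c + v \<in> F as long
   as |a_k| \<le> 1/(2(n+1)), which holds when |S v| \<le> \<theta>/(n+1). For symmetric F the centre 0 works:
   if |S v| \<le> \<theta>/\<surd>(n+1) then \<Sum> |a_k| \<le> \<surd>(n+1) (\<Sum> a_k\<^sup>2)^(1/2) \<le> 1/2, so v is a
   subconvex combination of the points \<plusminus>d_k/2 \<in> F. Letting \<theta> tend to c_n(S,F) gives the bounds. *)

lemma convex_sum_mem_if_zero_mem:
  fixes F :: "'a::real_vector set"
  assumes "convex F" "0 \<in> F" "finite I" "\<And>k. k \<in> I \<Longrightarrow> 0 \<le> \<mu> k" "sum \<mu> I \<le> 1"
    and "\<And>k. k \<in> I \<Longrightarrow> y k \<in> F"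
  shows "(\<Sum>k\<in>I. \<mu> k *\<^sub>R y k) \<in> F"
proof (cases "sum \<mu> I = 0")
  case True
  then have "\<forall>k\<in>I. \<mu> k = 0" using assms sum_nonneg_eq_0_iff by blast
  then show ?thesis using assms(2) by simp
next
  case False
  define s where "s = sum \<mu> I"
  have s: "0 < s" "s \<le> 1"
    using False assms(4,5) sum_nonneg[of I \<mu>] unfolding s_def by force+
  have "(\<Sum>k\<in>I. (\<mu> k / s) *\<^sub>R y k) \<in> F"
    using s assms by (intro convex_sum) (auto simp: s_def sum_divide_distrib[symmetric])
  then have "s *\<^sub>R (\<Sum>k\<in>I. (\<mu> k / s) *\<^sub>R y k) + (1 - s) *\<^sub>R 0 \<in> F"
    using assms(1,2) s by (intro convexD) auto
  moreover have "s *\<^sub>R (\<Sum>k\<in>I. (\<mu> k / s) *\<^sub>R y k) + (1 - s) *\<^sub>R 0 = (\<Sum>k\<in>I. \<mu> k *\<^sub>R y k)"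
    using s by (simp add: scaleR_sum_right)
  ultimately show ?thesis by simp
qed

lemma orthogonal_pair_beyond_gelfand_number:
  fixes S :: "'a::real_normed_vector \<Rightarrow> 'b::real_inner" and w :: "nat \<Rightarrow> 'b"
  assumes S: "bounded_linear S" and \<theta>: "ereal \<theta> < gelfand_number n S F" and "m \<le> n"
  obtains f g where "f \<in> F" "g \<in> F" "2 * \<theta> < norm (S (f - g))"
    and "\<And>j. j < m \<Longrightarrow> inner (S (f - g)) (w j) = 0"
proof -
  define L where "L j = (if j < m then (\<lambda>x. inner (S x) (w j)) else (\<lambda>x. 0))" for j
  have "bounded_linear (L j)" for j
    using bounded_linear_compose[OF bounded_linear_inner_left S]
    by (simp add: L_def bounded_linear_zero)
  then have "gelfand_number n S F
      \<le> Sup {ereal (norm (S f - S g) / 2) | f g. f \<in> F \<and> g \<in> F \<and> (\<forall>k<n. L k f = L k g)}"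
    unfolding gelfand_number_def by (intro INF_lower) simp
  with \<theta> have "ereal \<theta>
      < Sup {ereal (norm (S f - S g) / 2) | f g. f \<in> F \<and> g \<in> F \<and> (\<forall>k<n. L k f = L k g)}"
    by (rule order_less_le_trans)
  then obtain f g where fg: "f \<in> F" "g \<in> F" "\<forall>k<n. L k f = L k g"
    and far: "\<theta> < norm (S f - S g) / 2"
    by (auto simp: less_Sup_iff)
  have S_diff: "S (f - g) = S f - S g"
    using S by (simp add: linear_simps)
  show ?thesis
  proof (rule that)
    show "2 * \<theta> < norm (S (f - g))" using far S_diff by simp
    show "inner (S (f - g)) (w j) = 0" if "j < m" for j
    proof -
      have "L j f = L j g"
        using fg(3) that \<open>m \<le> n\<close> by simp
      then show ?thesis
        using that by (simp add: L_def S_diff inner_diff_left)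
    qed
  qed (use fg in auto)
qed

lemma orthogonal_pairs_beyond_gelfand_number:
  fixes S :: "'a::real_normed_vector \<Rightarrow> 'b::real_inner"
  assumes S: "bounded_linear S" and \<theta>: "ereal \<theta> < gelfand_number n S F" and "m \<le> Suc n"
  shows "\<exists>f g. (\<forall>k<m. f k \<in> F \<and> g k \<in> F \<and> 2 * \<theta> < norm (S (f k - g k))) \<and>
    (\<forall>j<m. \<forall>k<m. j \<noteq> k \<longrightarrow> inner (S (f j - g j)) (S (f k - g k)) = 0)"
  using \<open>m \<le> Suc n\<close>
proof (induction m)
  case 0
  then show ?case by simp
next
  case (Suc m)
  then obtain f g where old: "\<forall>k<m. f k \<in> F \<and> g k \<in> F \<and> 2 * \<theta> < norm (S (f k - g k))"
    and old_orth: "\<forall>j<m. \<forall>k<m. j \<noteq> k \<longrightarrow> inner (S (f j - g j)) (S (f k - g k)) = 0"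
    by auto
  obtain f' g' where new: "f' \<in> F" "g' \<in> F" "2 * \<theta> < norm (S (f' - g'))"
    and new_orth: "\<And>j. j < m \<Longrightarrow> inner (S (f' - g')) (S (f j - g j)) = 0"
    using orthogonal_pair_beyond_gelfand_number[OF S \<theta>, of m "\<lambda>j. S (f j - g j)"] Suc.prems
    by auto
  show ?case
    using old old_orth new new_orth
    by (intro exI[of _ "f(m := f')"] exI[of _ "g(m := g')"]) (auto simp: less_Suc_eq inner_commute)
qed

locale orthogonal_image_family =
  fixes S :: "'a::real_vector \<Rightarrow> 'b::real_inner" and d :: "'i \<Rightarrow> 'a" and I :: "'i set"
  assumes linear: "linear S" and finite: "finite I"
    and orthogonal: "\<And>j k. j \<in> I \<Longrightarrow> k \<in> I \<Longrightarrow> j \<noteq> k \<Longrightarrow> inner (S (d j)) (S (d k)) = 0"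
    and nonzero: "\<And>k. k \<in> I \<Longrightarrow> S (d k) \<noteq> 0"
begin

lemma inj_on_image_family: "inj_on (\<lambda>k. S (d k)) I"
proof (rule inj_onI)
  fix j k assume "j \<in> I" "k \<in> I" "S (d j) = S (d k)"
  then show "j = k"
    using orthogonal[of j k] nonzero[of j] by (cases "j = k") auto
qed

lemma inj_on_family: "inj_on d I"
  using inj_on_image_family by (auto simp: inj_on_def)

lemma independent_image: "independent (S ` d ` I)"
proof (rule pairwise_orthogonal_independent)
  show "pairwise orthogonal (S ` d ` I)"
    by (auto simp: pairwise_def orthogonal_def intro: orthogonal)
  show "0 \<notin> S ` d ` I"
    using nonzero by auto
qed

lemma inj_on_span: "inj_on S (span (d ` I))"
proof (rule linear_inj_on_span_independent_image[OF linear independent_image])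
  show "inj_on S (d ` I)"
    using inj_on_image_family by (simp add: inj_on_imageI comp_def)
qed

lemma span_familyE:
  assumes "v \<in> span (d ` I)"
  obtains a where "v = (\<Sum>k\<in>I. a k *\<^sub>R d k)"
proof -
  obtain u where "v = (\<Sum>x\<in>d ` I. u x *\<^sub>R x)"
    using assms span_finite[of "d ` I"] finite by auto
  also have "\<dots> = (\<Sum>k\<in>I. u (d k) *\<^sub>R d k)"
    using inj_on_family by (simp add: sum.reindex)
  finally show ?thesis by (rule that)
qed

lemma inner_image_sum:
  assumes "j \<in> I"
  shows "inner (S (\<Sum>k\<in>I. a k *\<^sub>R d k)) (S (d j)) = a j * (norm (S (d j)))\<^sup>2"
proof -
  have "inner (S (\<Sum>k\<in>I. a k *\<^sub>R d k)) (S (d j)) = (\<Sum>k\<in>I. a k * inner (S (d k)) (S (d j)))"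
    using linear by (simp add: linear_sum linear_scale inner_sum_left)
  also have "\<dots> = (\<Sum>k\<in>I. if k = j then a j * inner (S (d j)) (S (d j)) else 0)"
    using orthogonal assms by (intro sum.cong) auto
  also have "\<dots> = a j * (norm (S (d j)))\<^sup>2"
    using finite assms by (simp add: power2_norm_eq_inner)
  finally show ?thesis .
qed

lemma abs_coeff_le:
  assumes "j \<in> I"
  shows "\<bar>a j\<bar> * norm (S (d j)) \<le> norm (S (\<Sum>k\<in>I. a k *\<^sub>R d k))"
proof -
  have "\<bar>a j\<bar> * norm (S (d j)) * norm (S (d j)) = \<bar>inner (S (\<Sum>k\<in>I. a k *\<^sub>R d k)) (S (d j))\<bar>"
    using inner_image_sum[OF assms] by (simp add: abs_mult power2_eq_square)
  also have "\<dots> \<le> norm (S (\<Sum>k\<in>I. a k *\<^sub>R d k)) * norm (S (d j))"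
    by (rule Cauchy_Schwarz_ineq2)
  finally show ?thesis
    using nonzero[OF assms] by simp
qed

lemma norm_image_sum_squared:
  "(norm (S (\<Sum>k\<in>I. a k *\<^sub>R d k)))\<^sup>2 = (\<Sum>k\<in>I. (a k)\<^sup>2 * (norm (S (d k)))\<^sup>2)"
proof -
  have "(norm (S (\<Sum>k\<in>I. a k *\<^sub>R d k)))\<^sup>2
      = (\<Sum>k\<in>I. a k * inner (S (\<Sum>k\<in>I. a k *\<^sub>R d k)) (S (d k)))"
    using linear by (simp add: power2_norm_eq_inner linear_sum linear_scale inner_sum_right)
  also have "\<dots> = (\<Sum>k\<in>I. (a k)\<^sup>2 * (norm (S (d k)))\<^sup>2)"
    by (intro sum.cong) (auto simp: inner_image_sum power2_eq_square)
  finally show ?thesis .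
qed

lemma independent_family: "independent (d ` I)"
proof
  assume "dependent (d ` I)"
  then obtain u v where uv: "v \<in> d ` I" "u v \<noteq> 0" "(\<Sum>x\<in>d ` I. u x *\<^sub>R x) = 0"
    using finite by (auto simp: dependent_finite)
  then obtain j where j: "j \<in> I" "u (d j) \<noteq> 0"
    by blast
  have "(\<Sum>k\<in>I. u (d k) *\<^sub>R d k) = 0"
    using uv(3) inj_on_family by (simp add: sum.reindex)
  then have "u (d j) * (norm (S (d j)))\<^sup>2 = 0"
    using inner_image_sum[OF j(1), of "\<lambda>k. u (d k)"] linear by (simp add: linear_0)
  then show False
    using j nonzero by simp
qed

lemma dim_span_family: "dim (span (d ` I)) = card I"
  using dim_span_eq_card_independent[OF independent_family] card_image[OF inj_on_family] by simp

end

locale orthogonal_pairs =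
  fixes S :: "'a::real_normed_vector \<Rightarrow> 'b::real_inner" and F :: "'a set"
    and f g :: "'i \<Rightarrow> 'a" and I :: "'i set" and \<theta> :: real
  assumes linear_S: "linear S" and finite_I: "finite I" and convex_F: "convex F"
    and pos: "0 < \<theta>"
    and mem: "\<And>k. k \<in> I \<Longrightarrow> f k \<in> F \<and> g k \<in> F"
    and separated: "\<And>k. k \<in> I \<Longrightarrow> 2 * \<theta> < norm (S (f k - g k))"
    and orthogonal_differences:
      "\<And>j k. j \<in> I \<Longrightarrow> k \<in> I \<Longrightarrow> j \<noteq> k \<Longrightarrow> inner (S (f j - g j)) (S (f k - g k)) = 0"

sublocale orthogonal_pairs \<subseteq> differences: orthogonal_image_family S "\<lambda>k. f k - g k" I
proof (rule orthogonal_image_family.intro)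
  show "S (f k - g k) \<noteq> 0" if "k \<in> I" for k
    using separated[OF that] pos by auto
qed (use linear_S finite_I orthogonal_differences in auto)

context orthogonal_pairs
begin

lemma bernstein_radiusI:
  assumes "card I = n + 1" "0 < r" "c \<in> F"
    and "\<And>v. v \<in> span ((\<lambda>k. f k - g k) ` I) \<Longrightarrow> norm (S v) \<le> r \<Longrightarrow> c + v \<in> F"
  shows "r \<in> bernstein_radii n S F"
  unfolding bernstein_radii_def
  using assms differences.dim_span_family differences.inj_on_span
  by (intro CollectI conjI exI[of _ "span ((\<lambda>k. f k - g k) ` I)"] exI[of _ c]) auto

lemma segment_mem: "k \<in> I \<Longrightarrow> 0 \<le> t \<Longrightarrow> t \<le> 1 \<Longrightarrow> g k + t *\<^sub>R (f k - g k) \<in> F"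
  using convexD[OF convex_F, of "g k" "f k" "1 - t" t] mem
  by (simp add: algebra_simps)

lemma bernstein_radius_convex:
  assumes "card I = n + 1"
  shows "\<theta> / (n + 1) \<in> bernstein_radii n S F"
proof -
  define N where "N = real (n + 1)"
  have N: "0 < N" "sum (\<lambda>k. 1 / N) I = 1"
    using assms by (simp_all add: N_def)
  define c where "c = (\<Sum>k\<in>I. (1 / N) *\<^sub>R (g k + (1/2) *\<^sub>R (f k - g k)))"
  have shifted_mem: "c + (\<Sum>k\<in>I. a k *\<^sub>R (f k - g k)) \<in> F"
    if small: "\<And>k. k \<in> I \<Longrightarrow> \<bar>a k\<bar> \<le> 1 / (2 * N)" for a
  proof -
    have "(\<Sum>k\<in>I. (1 / N) *\<^sub>R (g k + (1/2 + N * a k) *\<^sub>R (f k - g k))) \<in> F"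
    proof (rule convex_sum[OF finite_I convex_F N(2)])
      fix k assume k: "k \<in> I"
      have "\<bar>N * a k\<bar> \<le> 1/2"
        using small[OF k] N by (simp add: abs_mult field_simps)
      then show "g k + (1/2 + N * a k) *\<^sub>R (f k - g k) \<in> F"
        using segment_mem[OF k] by simp
    qed (use N in simp)
    also have "(\<Sum>k\<in>I. (1 / N) *\<^sub>R (g k + (1/2 + N * a k) *\<^sub>R (f k - g k)))
        = (\<Sum>k\<in>I. (1 / N) *\<^sub>R (g k + (1/2) *\<^sub>R (f k - g k)) + a k *\<^sub>R (f k - g k))"
      using N by (intro sum.cong) (auto simp: algebra_simps)
    finally show ?thesis
      by (simp add: c_def sum.distrib)
  qed
  show ?thesis
  proof (rule bernstein_radiusI[OF assms])
    show "0 < \<theta> / (n + 1)" using pos by simp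
    show "c \<in> F" using shifted_mem[of "\<lambda>_. 0"] N by simp
    fix v assume v: "v \<in> span ((\<lambda>k. f k - g k) ` I)" "norm (S v) \<le> \<theta> / (n + 1)"
    obtain a where a: "v = (\<Sum>k\<in>I. a k *\<^sub>R (f k - g k))"
      using differences.span_familyE[OF v(1)] .
    have "\<bar>a k\<bar> \<le> 1 / (2 * N)" if k: "k \<in> I" for k
    proof -
      have "\<bar>a k\<bar> * (2 * \<theta>) \<le> \<bar>a k\<bar> * norm (S (f k - g k))"
        using separated[OF k] by (intro mult_left_mono) auto
      also have "\<dots> \<le> \<theta> / N"
        using differences.abs_coeff_le[OF k, of a] v(2) a by (simp add: N_def)
      finally show ?thesis
        using pos N by (simp add: field_simps)
    qed
    then show "c + v \<in> F"
      using shifted_mem a by blast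
  qed
qed

lemma sum_abs_coeff_le_half:
  assumes "I \<noteq> {}" and small: "norm (S (\<Sum>k\<in>I. a k *\<^sub>R (f k - g k))) \<le> \<theta> / sqrt (card I)"
  shows "(\<Sum>k\<in>I. \<bar>a k\<bar>) \<le> 1/2"
proof -
  define N where "N = real (card I)"
  have N: "0 < N"
    using assms(1) finite_I by (simp add: N_def card_gt_0_iff)
  have "(\<Sum>k\<in>I. (a k)\<^sup>2) * (2 * \<theta>)\<^sup>2 \<le> (\<Sum>k\<in>I. (a k)\<^sup>2 * (norm (S (f k - g k)))\<^sup>2)"
    unfolding sum_distrib_right
    using separated pos by (intro sum_mono mult_left_mono power_mono) (auto intro: less_imp_le)
  also have "\<dots> = (norm (S (\<Sum>k\<in>I. a k *\<^sub>R (f k - g k))))\<^sup>2"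
    by (rule differences.norm_image_sum_squared[symmetric])
  also have "\<dots> \<le> (\<theta> / sqrt N)\<^sup>2"
    using small by (intro power_mono) (simp_all add: N_def)
  also have "\<dots> = \<theta>\<^sup>2 / N"
    using N by (simp add: power_divide)
  finally have "((\<Sum>k\<in>I. (a k)\<^sup>2) * N * 4) * \<theta>\<^sup>2 \<le> 1 * \<theta>\<^sup>2"
    using N by (simp add: field_simps power_mult_distrib)
  then have "(\<Sum>k\<in>I. (a k)\<^sup>2) * N \<le> 1 / 4"
    using pos by (simp add: mult_le_cancel_right_pos)
  moreover have "(\<Sum>k\<in>I. \<bar>a k\<bar>)\<^sup>2 \<le> (\<Sum>k\<in>I. (a k)\<^sup>2) * N"
    using sum_squared_le_sum_of_squares[of "\<lambda>k. \<bar>a k\<bar>" I] by (simp add: N_def)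
  ultimately have "(\<Sum>k\<in>I. \<bar>a k\<bar>)\<^sup>2 \<le> (1/2)\<^sup>2"
    by (simp add: power2_eq_square)
  then show ?thesis
    by (rule power2_le_imp_le) simp
qed

lemma bernstein_radius_symmetric:
  assumes card: "card I = n + 1" and symmetric: "\<And>x. x \<in> F \<Longrightarrow> - x \<in> F"
  shows "\<theta> / sqrt (n + 1) \<in> bernstein_radii n S F"
proof -
  have midpoint_mem: "(1/2) *\<^sub>R x + (1/2) *\<^sub>R (- y) \<in> F" if "x \<in> F" "y \<in> F" for x y
    using that symmetric convexD[OF convex_F, of x "- y" "1/2" "1/2"] by simp
  have "I \<noteq> {}"
    using card by auto
  then obtain k0 where "k0 \<in> I"
    by blast
  then have zero_mem: "0 \<in> F"
    using midpoint_mem[of "f k0" "f k0"] mem by (simp flip: scaleR_right_distrib)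
  have half_difference_mem: "(1/2) *\<^sub>R (f k - g k) \<in> F" if "k \<in> I" for k
    using midpoint_mem[of "f k" "g k"] mem[OF that] by (simp add: algebra_simps)
  show ?thesis
  proof (rule bernstein_radiusI[OF card _ zero_mem])
    show "0 < \<theta> / sqrt (n + 1)" using pos by simp
    fix v assume v: "v \<in> span ((\<lambda>k. f k - g k) ` I)" "norm (S v) \<le> \<theta> / sqrt (n + 1)"
    obtain a where a: "v = (\<Sum>k\<in>I. a k *\<^sub>R (f k - g k))"
      using differences.span_familyE[OF v(1)] .
    have "(\<Sum>k\<in>I. \<bar>a k\<bar>) \<le> 1/2"
      using \<open>I \<noteq> {}\<close> v(2) card a by (intro sum_abs_coeff_le_half) simp_all
    then have sum_abs: "(\<Sum>k\<in>I. 2 * \<bar>a k\<bar>) \<le> 1"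
      by (simp add: sum_distrib_left[symmetric])
    have "(\<Sum>k\<in>I. (2 * \<bar>a k\<bar>) *\<^sub>R (sgn (a k) *\<^sub>R ((1/2) *\<^sub>R (f k - g k)))) \<in> F"
    proof (rule convex_sum_mem_if_zero_mem[OF convex_F zero_mem finite_I _ sum_abs])
      fix k assume k: "k \<in> I"
      consider "a k > 0" | "a k = 0" | "a k < 0" by linarith
      then show "sgn (a k) *\<^sub>R ((1/2) *\<^sub>R (f k - g k)) \<in> F"
        by cases (use half_difference_mem[OF k] symmetric zero_mem in auto)
    qed simp
    also have "(\<Sum>k\<in>I. (2 * \<bar>a k\<bar>) *\<^sub>R (sgn (a k) *\<^sub>R ((1/2) *\<^sub>R (f k - g k)))) = v"
      unfolding a by (intro sum.cong) (auto simp: sgn_if)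
    finally show "0 + v \<in> F" by simp
  qed
qed

end

lemma bernstein_radius_le_bernstein_number:
  "r \<in> bernstein_radii n S F \<Longrightarrow> ereal r \<le> bernstein_number n S F"
  unfolding bernstein_number_def by (auto intro: Sup_upper)

lemma bernstein_number_nonneg: "0 \<le> bernstein_number n S F"
proof (cases "bernstein_radii n S F = {}")
  case True
  then show ?thesis by (simp add: bernstein_number_def)
next
  case False
  then obtain r where r: "r \<in> bernstein_radii n S F" by auto
  then have "0 \<le> ereal r" by (simp add: bernstein_radii_def)
  also have "\<dots> \<le> bernstein_number n S F"
    using r by (rule bernstein_radius_le_bernstein_number)
  finally show ?thesis .
qed

lemma gelfand_number_le_scaled_bernstein_number:
  assumes c: "0 < c"
    and radius: "\<And>\<theta>. 0 < \<theta> \<Longrightarrow> ereal \<theta> < gelfand_number n S F \<Longrightarrow> \<theta> / c \<in> bernstein_radii n S F"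
  shows "gelfand_number n S F \<le> ereal c * bernstein_number n S F"
proof (rule dense_le)
  fix y assume y: "y < gelfand_number n S F"
  show "y \<le> ereal c * bernstein_number n S F"
  proof (cases "y \<le> 0")
    case True
    moreover have "0 \<le> ereal c * bernstein_number n S F"
      using bernstein_number_nonneg[of n S F] c by simp
    ultimately show ?thesis
      by (rule order_trans)
  next
    case False
    with y obtain \<theta> where \<theta>: "y = ereal \<theta>" "0 < \<theta>"
      by (cases y) auto
    have "ereal (\<theta> / c) \<le> bernstein_number n S F"
      using \<theta> y by (intro bernstein_radius_le_bernstein_number radius) simp_all
    then have "ereal c * ereal (\<theta> / c) \<le> ereal c * bernstein_number n S F"
      using c by (intro ereal_mult_left_mono) auto
    then show ?thesis
      using \<theta> c by simp
  qed
qed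

theorem theorem3p5:
  fixes S :: "'a::banach \<Rightarrow> 'b::{real_inner, complete_space}"
    and F :: "'a set" and n :: nat
  assumes "bounded_linear S"
    and "convex F"
  shows "gelfand_number n S F \<le> ereal (real (n + 1)) * bernstein_number n S F \<and>
         ((\<forall>x\<in>F. - x \<in> F) \<longrightarrow>
           gelfand_number n S F \<le> ereal (sqrt (real (n + 1))) * bernstein_number n S F)"
proof -
  have pairs: "\<exists>f g. orthogonal_pairs S F f g {..<Suc n} \<theta>"
    if pos: "0 < \<theta>" and below: "ereal \<theta> < gelfand_number n S F" for \<theta>
  proof -
    obtain f g where "\<forall>k<Suc n. f k \<in> F \<and> g k \<in> F \<and> 2 * \<theta> < norm (S (f k - g k))"
      "\<forall>j<Suc n. \<forall>k<Suc n. j \<noteq> k \<longrightarrow> inner (S (f j - g j)) (S (f k - g k)) = 0"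
      using orthogonal_pairs_beyond_gelfand_number[OF assms(1) below order_refl] by blast
    then have "orthogonal_pairs S F f g {..<Suc n} \<theta>"
      using assms pos by (intro orthogonal_pairs.intro) (auto simp: bounded_linear.linear)
    then show ?thesis by blast
  qed
  show ?thesis
  proof (intro conjI impI)
    show "gelfand_number n S F \<le> ereal (real (n + 1)) * bernstein_number n S F"
      using pairs orthogonal_pairs.bernstein_radius_convex
      by (intro gelfand_number_le_scaled_bernstein_number) fastforce+
    assume "\<forall>x\<in>F. - x \<in> F"
    then show "gelfand_number n S F \<le> ereal (sqrt (real (n + 1))) * bernstein_number n S F"
      using pairs orthogonal_pairs.bernstein_radius_symmetric
      by (intro gelfand_number_le_scaled_bernstein_number) fastforce+
  qed
qed

end
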